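(* Let $H\in C^\infty(\mathbb{R}^2)$ be convex and let $U\subset\mathbb{R}^2$ be a domain. For every $v\in C^\infty(U)$, $$\langle D^2_{pp}H(Dv)D[H(Dv)],D[H(Dv)]\rangle-\operatorname{div}[D_pH(Dv)]\,\mathscr A_H[v]=(-\det D^2v)\langle[D^2_{pp}H(Dv)]^*D_pH(Dv),D_pH(Dv)\rangle\quad\text{in }U.$$
   Context: $\mathscr A_H[v]:=\sum_{i,j=1}^2H_{p_i}(Dv)H_{p_j}(Dv)v_{x_ix_j}$. For a $2\times2$ matrix $A=(a_{ij})$, $A^*$ is its adjugate $\begin{pmatrix}a_{22}&-a_{21}\\-a_{12}&a_{11}\end{pmatrix}$. *)

theory Defs
  imports "HOL-Analysis.Analysis"
begin

text \<open>Points of the plane are elements of real^2; coordinates are indexed by 1 and 2 :: 2.\<close>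

definition partial :: "2 \<Rightarrow> (real^2 \<Rightarrow> real) \<Rightarrow> real^2 \<Rightarrow> real" where
  "partial i f x = deriv (\<lambda>t. f (x + t *\<^sub>R axis i 1)) 0"

fun iter_partial :: "2 list \<Rightarrow> (real^2 \<Rightarrow> real) \<Rightarrow> real^2 \<Rightarrow> real" where
  "iter_partial [] f = f"
| "iter_partial (i # is) f = partial i (iter_partial is f)"

definition smooth_on :: "(real^2) set \<Rightarrow> (real^2 \<Rightarrow> real) \<Rightarrow> bool" where
  "smooth_on U f \<longleftrightarrow> (\<forall>is. \<forall>x\<in>U. iter_partial is f differentiable (at x))"

definition grad :: "(real^2 \<Rightarrow> real) \<Rightarrow> real^2 \<Rightarrow> real^2" where
  "grad f x = (\<chi> i. partial i f x)"

definition hess :: "(real^2 \<Rightarrow> real) \<Rightarrow> real^2 \<Rightarrow> real^2^2" where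
  "hess f x = (\<chi> i j. partial i (partial j f) x)"

definition adj2 :: "real^2^2 \<Rightarrow> real^2^2" where
  "adj2 A = (\<chi> i j. if i = 1 \<and> j = 1 then A $ 2 $ 2
                    else if i = 1 \<and> j = 2 then - A $ 2 $ 1
                    else if i = 2 \<and> j = 1 then - A $ 1 $ 2
                    else A $ 1 $ 1)"

definition AH :: "(real^2 \<Rightarrow> real) \<Rightarrow> (real^2 \<Rightarrow> real) \<Rightarrow> real^2 \<Rightarrow> real" where
  "AH H v x = (\<Sum>i\<in>UNIV. \<Sum>j\<in>UNIV.
      partial i H (grad v x) * partial j H (grad v x) * partial i (partial j v) x)"

end

theory Submission
  imports Defs
begin

text \<open>Write a = D_pH(Dv), B = D^2_ppH(Dv) and S = D^2v. By the chain rule,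
  D[H(Dv)] = S a, div[D_pH(Dv)] = tr (S B) and A_H[v] = <a, S a>. The claim is then a
  polynomial identity for 2x2 matrices that only needs the symmetry of S (Schwarz's theorem).\<close>

lemma has_real_derivative_along_line:
  assumes "(f has_derivative f') (at (y + t *\<^sub>R e))"
  shows "((\<lambda>s. f (y + s *\<^sub>R e)) has_real_derivative f' e) (at t)"
proof -
  have "((\<lambda>s. y + s *\<^sub>R e) has_derivative (\<lambda>s. s *\<^sub>R e)) (at t)"
    by (auto intro!: derivative_eq_intros)
  then have "((\<lambda>s. f (y + s *\<^sub>R e)) has_derivative (\<lambda>s. f' (s *\<^sub>R e))) (at t)"
    using has_derivative_compose assms by blast
  moreover have "\<And>s. s * f' e = f' (s *\<^sub>R e)"
    using assms has_derivative_linear linear_scale by (metis real_scaleR_def)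
  ultimately show ?thesis
    by (rule has_derivative_imp_has_field_derivative)
qed

lemma partial_eq_derivative:
  assumes "(f has_derivative f') (at z)"
  shows "partial k f z = f' (axis k 1)"
  unfolding partial_def
  by (rule DERIV_imp_deriv, rule has_real_derivative_along_line) (use assms in simp)

lemma has_real_derivative_partial_along_axis:
  assumes "f differentiable (at (y + t *\<^sub>R axis k 1))"
  shows "((\<lambda>s. f (y + s *\<^sub>R axis k 1)) has_real_derivative partial k f (y + t *\<^sub>R axis k 1)) (at t)"
proof -
  obtain f' where f': "(f has_derivative f') (at (y + t *\<^sub>R axis k 1))"
    using assms by (auto simp: differentiable_def)
  show ?thesis
    using has_real_derivative_along_line[OF f'] partial_eq_derivative[OF f'] by simp
qed

lemma grad_eq_axis_sum: "grad v y = partial 1 v y *\<^sub>R axis 1 1 + partial 2 v y *\<^sub>R axis 2 1"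
  by (simp add: grad_def vec_eq_iff forall_2 axis_def)

lemma grad_comp_grad:
  assumes g: "g differentiable (at (grad v x))"
    and v: "\<And>i. partial i v differentiable (at x)"
  shows "grad (\<lambda>y. g (grad v y)) x = hess v x *v grad g (grad v x)"
proof -
  obtain G where G: "(g has_derivative G) (at (grad v x))"
    using g by (auto simp: differentiable_def)
  obtain D1 where D1: "(partial 1 v has_derivative D1) (at x)"
    using v by (auto simp: differentiable_def)
  obtain D2 where D2: "(partial 2 v has_derivative D2) (at x)"
    using v by (auto simp: differentiable_def)
  have "(grad v has_derivative (\<lambda>d. D1 d *\<^sub>R axis 1 1 + D2 d *\<^sub>R axis 2 1)) (at x)"
    unfolding grad_eq_axis_sum[abs_def]
    by (intro has_derivative_add has_derivative_scaleR_left D1 D2)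
  then have comp: "((\<lambda>y. g (grad v y)) has_derivative
      (\<lambda>d. G (D1 d *\<^sub>R axis 1 1 + D2 d *\<^sub>R axis 2 1))) (at x)"
    using has_derivative_compose G by blast
  have "linear G"
    using G has_derivative_linear by blast
  then have "G (a *\<^sub>R axis 1 1 + b *\<^sub>R axis 2 1) = a * G (axis 1 1) + b * G (axis 2 1)" for a b
    by (simp add: linear_add linear_scale)
  then show ?thesis
    using partial_eq_derivative[OF comp] partial_eq_derivative[OF G]
      partial_eq_derivative[OF D1] partial_eq_derivative[OF D2]
    by (simp add: vec_eq_iff grad_def hess_def matrix_vector_mult_def sum_2 mult.commute)
qed

lemma second_difference_mean_value:
  fixes f :: "real^2 \<Rightarrow> real" and i j :: 2
  assumes h: "h > 0"
    and diff: "\<And>s t. 0 \<le> s \<Longrightarrow> s \<le> h \<Longrightarrow> 0 \<le> t \<Longrightarrow> t \<le> h \<Longrightarrow>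
      f differentiable (at (x + s *\<^sub>R axis i 1 + t *\<^sub>R axis j 1)) \<and>
      partial i f differentiable (at (x + s *\<^sub>R axis i 1 + t *\<^sub>R axis j 1))"
  obtains s t where "0 < s" "s < h" "0 < t" "t < h"
    "f (x + h *\<^sub>R axis i 1 + h *\<^sub>R axis j 1) - f (x + h *\<^sub>R axis i 1) - f (x + h *\<^sub>R axis j 1) + f x
      = h\<^sup>2 * partial j (partial i f) (x + s *\<^sub>R axis i 1 + t *\<^sub>R axis j 1)"
proof -
  define ei where "ei = axis i (1::real)"
  define ej where "ej = axis j (1::real)"
  define g where "g s = f ((x + h *\<^sub>R ej) + s *\<^sub>R ei) - f (x + s *\<^sub>R ei)" for s
  have "DERIV g s :> partial i f ((x + h *\<^sub>R ej) + s *\<^sub>R ei) - partial i f (x + s *\<^sub>R ei)"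
    if "0 \<le> s" "s \<le> h" for s
  proof -
    have "f differentiable (at ((x + h *\<^sub>R ej) + s *\<^sub>R ei))"
      using diff[of s h] that h by (simp add: ei_def ej_def add_ac)
    moreover have "f differentiable (at (x + s *\<^sub>R ei))"
      using diff[of s 0] that h by (simp add: ei_def ej_def)
    ultimately show ?thesis
      unfolding g_def ei_def
      by (intro derivative_intros has_real_derivative_partial_along_axis)
  qed
  from MVT2[OF h this] obtain s where s: "0 < s" "s < h"
    and gs: "g h - g 0 = h * (partial i f ((x + h *\<^sub>R ej) + s *\<^sub>R ei) - partial i f (x + s *\<^sub>R ei))"
    by auto
  define k where "k t = partial i f ((x + s *\<^sub>R ei) + t *\<^sub>R ej)" for t
  have "DERIV k t :> partial j (partial i f) ((x + s *\<^sub>R ei) + t *\<^sub>R ej)"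
    if "0 \<le> t" "t \<le> h" for t
  proof -
    have "partial i f differentiable (at ((x + s *\<^sub>R ei) + t *\<^sub>R ej))"
      using diff[of s t] that s by (simp add: ei_def ej_def)
    then show ?thesis
      unfolding k_def ej_def by (rule has_real_derivative_partial_along_axis)
  qed
  from MVT2[OF h this] obtain t where t: "0 < t" "t < h"
    and kt: "k h - k 0 = h * partial j (partial i f) ((x + s *\<^sub>R ei) + t *\<^sub>R ej)"
    by auto
  have "f (x + h *\<^sub>R ei + h *\<^sub>R ej) - f (x + h *\<^sub>R ei) - f (x + h *\<^sub>R ej) + f x = g h - g 0"
    by (simp add: g_def add_ac)
  also have "\<dots> = h * (k h - k 0)"
    using gs by (simp add: k_def add_ac)
  also have "\<dots> = h\<^sup>2 * partial j (partial i f) ((x + s *\<^sub>R ei) + t *\<^sub>R ej)"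
    using kt by (simp add: power2_eq_square)
  finally show ?thesis
    using that s t unfolding ei_def ej_def by blast
qed

text \<open>Schwarz's theorem: both mixed partials are limits of the same second difference
  quotient, which the mean value theorem expresses through either of them.\<close>

lemma partial_partial_commute:
  fixes f :: "real^2 \<Rightarrow> real"
  assumes S: "open S" "x \<in> S"
    and diff: "\<And>y i. y \<in> S \<Longrightarrow> f differentiable (at y) \<and> partial i f differentiable (at y)"
    and cont12: "continuous (at x) (partial 1 (partial 2 f))"
    and cont21: "continuous (at x) (partial 2 (partial 1 f))"
  shows "partial 1 (partial 2 f) x = partial 2 (partial 1 f) x"
proof (rule ccontr)
  let ?a = "partial 1 (partial 2 f) x" and ?b = "partial 2 (partial 1 f) x"
  assume "?a \<noteq> ?b"
  define e where "e = \<bar>?a - ?b\<bar> / 3"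
  have e: "e > 0"
    using \<open>?a \<noteq> ?b\<close> by (simp add: e_def)
  obtain d0 where d0: "d0 > 0" "ball x d0 \<subseteq> S"
    using S open_contains_ball by blast
  obtain d1 where d1: "d1 > 0" "\<And>y. dist y x < d1 \<Longrightarrow> dist (partial 1 (partial 2 f) y) ?a < e"
    using cont12 e unfolding continuous_at_eps_delta by blast
  obtain d2 where d2: "d2 > 0" "\<And>y. dist y x < d2 \<Longrightarrow> dist (partial 2 (partial 1 f) y) ?b < e"
    using cont21 e unfolding continuous_at_eps_delta by blast
  define h where "h = min d0 (min d1 d2) / 3"
  have h: "h > 0"
    using d0 d1 d2 by (simp add: h_def)
  have close: "dist (x + s *\<^sub>R axis i 1 + t *\<^sub>R axis j 1) x < min d0 (min d1 d2)"
    if "0 \<le> s" "s \<le> h" "0 \<le> t" "t \<le> h" for s t and i j :: 2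
  proof -
    have "dist (x + s *\<^sub>R axis i 1 + t *\<^sub>R axis j 1) x
        = norm (s *\<^sub>R axis i (1::real) + t *\<^sub>R axis j 1)"
      by (simp add: dist_norm)
    also have "\<dots> \<le> norm (s *\<^sub>R axis i (1::real)) + norm (t *\<^sub>R axis j (1::real))"
      by (rule norm_triangle_ineq)
    also have "\<dots> = s + t"
      using that by simp
    finally show ?thesis
      using that h unfolding h_def by linarith
  qed
  have diff_rect: "f differentiable (at (x + s *\<^sub>R axis i 1 + t *\<^sub>R axis j 1)) \<and>
      partial i f differentiable (at (x + s *\<^sub>R axis i 1 + t *\<^sub>R axis j 1))"
    if "0 \<le> s" "s \<le> h" "0 \<le> t" "t \<le> h" for s t and i j :: 2
    using close[OF that, of i j] d0(2) diff by (auto simp: dist_commute subset_iff)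
  obtain s1 t1 where st1: "0 < s1" "s1 < h" "0 < t1" "t1 < h"
    and E1: "f (x + h *\<^sub>R axis 1 1 + h *\<^sub>R axis 2 1) - f (x + h *\<^sub>R axis 1 1) - f (x + h *\<^sub>R axis 2 1) + f x
      = h\<^sup>2 * partial 2 (partial 1 f) (x + s1 *\<^sub>R axis 1 1 + t1 *\<^sub>R axis 2 1)"
    using second_difference_mean_value[where i=1 and j=2, OF h diff_rect] by blast
  obtain s2 t2 where st2: "0 < s2" "s2 < h" "0 < t2" "t2 < h"
    and E2: "f (x + h *\<^sub>R axis 2 1 + h *\<^sub>R axis 1 1) - f (x + h *\<^sub>R axis 2 1) - f (x + h *\<^sub>R axis 1 1) + f x
      = h\<^sup>2 * partial 1 (partial 2 f) (x + s2 *\<^sub>R axis 2 1 + t2 *\<^sub>R axis 1 1)"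
    using second_difference_mean_value[where i=2 and j=1, OF h diff_rect] by blast
  have swap: "x + h *\<^sub>R axis 2 1 + h *\<^sub>R axis 1 1 = x + h *\<^sub>R axis 1 1 + h *\<^sub>R axis (2::2) 1"
    by (simp add: add_ac)
  have "h\<^sup>2 * partial 2 (partial 1 f) (x + s1 *\<^sub>R axis 1 1 + t1 *\<^sub>R axis 2 1)
      = h\<^sup>2 * partial 1 (partial 2 f) (x + s2 *\<^sub>R axis 2 1 + t2 *\<^sub>R axis 1 1)"
    using E1 E2[unfolded swap] by linarith
  then have same: "partial 2 (partial 1 f) (x + s1 *\<^sub>R axis 1 1 + t1 *\<^sub>R axis 2 1)
      = partial 1 (partial 2 f) (x + s2 *\<^sub>R axis 2 1 + t2 *\<^sub>R axis 1 1)"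
    using h by simp
  have "\<bar>partial 2 (partial 1 f) (x + s1 *\<^sub>R axis 1 1 + t1 *\<^sub>R axis 2 1) - ?b\<bar> < e"
    using close[of s1 t1 1 2] st1 d2(2) by (simp add: dist_real_def)
  moreover have "\<bar>partial 1 (partial 2 f) (x + s2 *\<^sub>R axis 2 1 + t2 *\<^sub>R axis 1 1) - ?a\<bar> < e"
    using close[of s2 t2 2 1] st2 d1(2) by (simp add: dist_real_def)
  ultimately have "\<bar>?a - ?b\<bar> < 2 * e"
    using same by linarith
  moreover have "\<bar>?a - ?b\<bar> = 3 * e"
    by (simp add: e_def)
  ultimately show False
    using e by linarith
qed

lemma smooth_on_differentiable:
  assumes "smooth_on U f" "x \<in> U"
  shows "f differentiable (at x)" "partial i f differentiable (at x)"
    "partial i (partial j f) differentiable (at x)"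
proof -
  have "\<And>is. iter_partial is f differentiable (at x)"
    using assms unfolding smooth_on_def by blast
  from this[of "[]"] this[of "[i]"] this[of "[i, j]"] show
    "f differentiable (at x)" "partial i f differentiable (at x)"
    "partial i (partial j f) differentiable (at x)" by simp_all
qed

lemma transpose_hess:
  assumes "smooth_on U f" "open U" "x \<in> U"
  shows "transpose (hess f x) = hess f x"
proof -
  have "partial 1 (partial 2 f) x = partial 2 (partial 1 f) x"
    using assms smooth_on_differentiable[OF assms(1)]
    by (intro partial_partial_commute[of U]) (auto intro: differentiable_imp_continuous_within)
  then show ?thesis
    by (simp add: transpose_def hess_def vec_eq_iff forall_2)
qed

lemma adj2_quadratic_form_identity:
  fixes A S :: "real^2^2" and a :: "real^2"
  assumes "transpose S = S"
  shows "(A *v (S *v a)) \<bullet> (S *v a) - trace (S ** A) * (a \<bullet> (S *v a))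
       = - det S * ((adj2 A *v a) \<bullet> a)"
proof -
  have "S $ 2 $ 1 = S $ 1 $ 2"
    using arg_cong[where f="\<lambda>M. M $ 1 $ 2", OF assms] by (simp add: transpose_def)
  then show ?thesis
    by (simp add: matrix_vector_mult_def inner_vec_def trace_def matrix_matrix_mult_def
        adj2_def det_2 sum_2) (simp add: algebra_simps)
qed

theorem lemma2p1:
  fixes H v :: "real^2 \<Rightarrow> real" and U :: "(real^2) set"
  assumes "smooth_on UNIV H" and "convex_on UNIV H"
    and "open U" and "connected U"
    and "smooth_on U v"
    and "x \<in> U"
  shows "(hess H (grad v x) *v grad (\<lambda>y. H (grad v y)) x) \<bullet> grad (\<lambda>y. H (grad v y)) x
         - (\<Sum>i\<in>UNIV. partial i (\<lambda>y. partial i H (grad v y)) x) * AH H v x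
       = (- det (hess v x)) * ((adj2 (hess H (grad v x)) *v grad H (grad v x)) \<bullet> grad H (grad v x))"
proof -
  let ?p = "grad v x" and ?S = "hess v x"
  note H = smooth_on_differentiable[OF assms(1) UNIV_I]
  note v = smooth_on_differentiable[OF assms(5,6)]
  have grad_H: "grad (\<lambda>y. H (grad v y)) x = ?S *v grad H ?p"
    using H v by (intro grad_comp_grad)
  have "partial i (\<lambda>y. partial i H (grad v y)) x = (?S *v grad (partial i H) ?p) $ i" for i
  proof -
    have "grad (\<lambda>y. partial i H (grad v y)) x = ?S *v grad (partial i H) ?p"
      using H v by (intro grad_comp_grad)
    from arg_cong[where f="\<lambda>w. w $ i", OF this] show ?thesis
      by (simp only: grad_def vec_lambda_beta)
  qed
  then have div: "(\<Sum>i\<in>UNIV. partial i (\<lambda>y. partial i H (grad v y)) x) = trace (?S ** hess H ?p)"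
    by (simp add: trace_def matrix_matrix_mult_def matrix_vector_mult_def grad_def hess_def)
  have AH: "AH H v x = grad H ?p \<bullet> (?S *v grad H ?p)"
    by (simp add: AH_def inner_vec_def matrix_vector_mult_def grad_def hess_def
        sum_distrib_left mult_ac)
  show ?thesis
    unfolding grad_H div AH
    using adj2_quadratic_form_identity transpose_hess[OF assms(5,3,6)] by blast
qed

end
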